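(* For every integer $p\ge 1$, the edge set of $K_{4p,4p,4p}\times K_2$ can be partitioned into $2p+1$ planar subgraphs; in particular $\theta(K_{4p,4p,4p}\times K_2)\le 2p+1$.
   Context: The thickness $\theta(G)$ of a graph $G$ is the minimum number of planar subgraphs whose union is $G$. The Kronecker product $G\times H$ of graphs $G$ and $H$ is the graph with vertex set $V(G)\times V(H)$ in which $(g,h)$ and $(g',h')$ are adjacent if and only if $gg'\in E(G)$ and $hh'\in E(H)$. $K_{n,n,n}$ denotes the complete tripartite graph with three parts of size $n$. *)

theory Defs
  imports "HOL-Analysis.Analysis"
begin

definition simple_graph :: "'a set \<Rightarrow> 'a set set \<Rightarrow> bool" where
  "simple_graph V E \<longleftrightarrow> finite V \<and> (\<forall>e\<in>E. \<exists>u v. e = {u, v} \<and> u \<noteq> v \<and> u \<in> V \<and> v \<in> V)"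

definition planar_graph :: "'a set \<Rightarrow> 'a set set \<Rightarrow> bool" where
  "planar_graph V E \<longleftrightarrow>
     (\<exists>(pos :: 'a \<Rightarrow> real^2) (crv :: 'a set \<Rightarrow> real \<Rightarrow> real^2).
        inj_on pos V \<and>
        (\<forall>e\<in>E. \<exists>u v. e = {u, v} \<and> u \<noteq> v \<and> arc (crv e) \<and>
                 pathstart (crv e) = pos u \<and> pathfinish (crv e) = pos v) \<and>
        (\<forall>e\<in>E. \<forall>w\<in>V. pos w \<in> path_image (crv e) \<longrightarrow> w \<in> e) \<and>
        (\<forall>e\<in>E. \<forall>e'\<in>E. e \<noteq> e' \<longrightarrow>
             path_image (crv e) \<inter> path_image (crv e') \<subseteq> pos ` (e \<inter> e')))"

definition thickness :: "'a set \<Rightarrow> 'a set set \<Rightarrow> nat" where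
  "thickness V E = (LEAST k. \<exists>Es :: nat \<Rightarrow> 'a set set.
      (\<forall>i<k. Es i \<subseteq> E \<and> planar_graph V (Es i)) \<and> (\<Union>i<k. Es i) = E)"

definition kron_vertices :: "'a set \<Rightarrow> 'b set \<Rightarrow> ('a \<times> 'b) set" where
  "kron_vertices VG VH = VG \<times> VH"

definition kron_edges :: "'a set set \<Rightarrow> 'b set set \<Rightarrow> ('a \<times> 'b) set set" where
  "kron_edges EG EH = {{(g, h), (g', h')} | g h g' h'. {g, g'} \<in> EG \<and> {h, h'} \<in> EH}"

definition Knnn_vertices :: "nat \<Rightarrow> (nat \<times> nat) set" where
  "Knnn_vertices n = {0..<3} \<times> {0..<n}"

definition Knnn_edges :: "nat \<Rightarrow> (nat \<times> nat) set set" where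
  "Knnn_edges n = {{u, v} | u v. u \<in> Knnn_vertices n \<and> v \<in> Knnn_vertices n \<and> fst u \<noteq> fst v}"

definition K2_vertices :: "nat set" where "K2_vertices = {0, 1}"
definition K2_edges :: "nat set set" where "K2_edges = {{0, 1}}"

end

theory Submission
  imports Defs
begin

text \<open>Label the six classes (part, side of K_2) by k \<in> Z_6, using Z_6 = Z_3 \<times> Z_2. Two vertices
of K_{n,n,n} \<times> K_2 are adjacent iff their classes are consecutive mod 6, so the graph is a 6-cycle
whose vertices are blown up into n = 4p independent vertices. Group the indices of each class into
2p pairs {2t, 2t+1}. An edge from vertex j of class k to vertex j' of class k+1 goes to layer
j div 2, unless j and j' are the two different members of one pair; those exceptional edges form 4p
disjoint hexagons, the last layer. Every layer has a two-page book embedding: vertices on a line,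
each edge a parabolic arc above or below it, no two arcs on the same side interleaving. Two such
arcs meet only at common endpoints, since over nested intervals the inner parabola lies strictly
below the outer one.\<close>

definition plane_point :: "real \<Rightarrow> real \<Rightarrow> real^2" where
  "plane_point x y = x *\<^sub>R axis 1 1 + y *\<^sub>R axis 2 1"

lemma plane_point_nth [simp]: "plane_point x y $ 1 = x" "plane_point x y $ 2 = y"
  by (simp_all add: plane_point_def axis_def)

lemma plane_point_eq_iff [simp]: "plane_point x y = plane_point x' y' \<longleftrightarrow> x = x' \<and> y = y'"
  by (metis plane_point_nth)

lemma continuous_on_plane_point [continuous_intros]:
  "continuous_on S f \<Longrightarrow> continuous_on S g \<Longrightarrow> continuous_on S (\<lambda>s. plane_point (f s) (g s))"
  unfolding plane_point_def by (intro continuous_intros)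

definition side_sign :: "bool \<Rightarrow> real" where
  "side_sign upper = (if upper then 1 else -1)"

lemma side_sign_nonzero [simp]: "side_sign upper \<noteq> 0"
  by (simp add: side_sign_def)

definition parabolic_arc :: "real \<Rightarrow> real \<Rightarrow> bool \<Rightarrow> real \<Rightarrow> real^2" where
  "parabolic_arc a b upper s =
     plane_point (a + s * (b - a)) (side_sign upper * (s * (b - a)) * ((1 - s) * (b - a)))"

lemma arc_parabolic_arc: "a < b \<Longrightarrow> arc (parabolic_arc a b upper)"
  unfolding arc_def path_def parabolic_arc_def by (auto intro!: continuous_intros inj_onI)

lemma pathstart_parabolic_arc [simp]: "pathstart (parabolic_arc a b upper) = plane_point a 0"
  and pathfinish_parabolic_arc [simp]: "pathfinish (parabolic_arc a b upper) = plane_point b 0"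
  by (simp_all add: pathstart_def pathfinish_def parabolic_arc_def)

lemma path_image_parabolic_arc:
  assumes "a < b" "z \<in> path_image (parabolic_arc a b upper)"
  obtains x where "a \<le> x" "x \<le> b" "z = plane_point x (side_sign upper * ((x - a) * (b - x)))"
proof -
  from assms obtain s where s: "0 \<le> s" "s \<le> 1" "z = parabolic_arc a b upper s"
    by (auto simp: path_image_def)
  have "0 \<le> s * (b - a)" "s * (b - a) \<le> b - a"
    using s assms by (simp_all add: mult_left_le_one_le)
  then have "a \<le> a + s * (b - a)" "a + s * (b - a) \<le> b"
    by simp_all
  moreover have "z = plane_point (a + s * (b - a))
      (side_sign upper * (((a + s * (b - a)) - a) * (b - (a + s * (b - a)))))"
    by (simp add: s parabolic_arc_def algebra_simps)
  ultimately show thesis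
    by (rule that)
qed

lemma nested_parabolas_meet_on_axis:
  fixes a b a' b' x :: real
  assumes "a \<le> a'" "b' \<le> b" "(a, b) \<noteq> (a', b')" "a' \<le> x" "x \<le> b'"
    and "(x - a) * (b - x) = (x - a') * (b' - x)"
  shows "(x - a) * (b - x) = 0"
proof -
  \<comment> \<open>the difference of the two heights is a sum of two nonnegative terms\<close>
  have "(x - a) * (b - b') + (a' - a) * (b' - x) = 0"
    using assms(6) by (simp add: algebra_simps)
  moreover have "(x - a) * (b - b') \<ge> 0" "(a' - a) * (b' - x) \<ge> 0"
    using assms by simp_all
  ultimately have "(x - a) * (b - b') = 0" "(a' - a) * (b' - x) = 0"
    by linarith+
  then show ?thesis
    using assms by (cases "b = b'") auto
qed

lemma parabola_heights_eq_only_at_ends: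
  fixes a b a' b' x :: real
  assumes "a < b" "a' < b'" "a \<le> x" "x \<le> b" "a' \<le> x" "x \<le> b'"
    and height: "side_sign upper * ((x - a) * (b - x)) = side_sign upper' * ((x - a') * (b' - x))"
    and same_side: "upper = upper' \<Longrightarrow>
      (a, b) \<noteq> (a', b') \<and> \<not> (a < a' \<and> a' < b \<and> b < b') \<and> \<not> (a' < a \<and> a < b' \<and> b' < b)"
  shows "x \<in> {a, b} \<and> x \<in> {a', b'}"
proof -
  have nonneg: "(x - a) * (b - x) \<ge> 0" "(x - a') * (b' - x) \<ge> 0"
    using assms by simp_all
  have "(x - a) * (b - x) = 0 \<and> (x - a') * (b' - x) = 0"
  proof (cases "upper = upper'")
    case False
    then have "(x - a) * (b - x) = - ((x - a') * (b' - x))"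
      using height by (cases upper) (simp_all add: side_sign_def)
    then show ?thesis using nonneg by linarith
  next
    case True
    then have eq: "(x - a) * (b - x) = (x - a') * (b' - x)"
      using height by simp
    consider "b \<le> a' \<or> b' \<le> a" | "a \<le> a'" "b' \<le> b" | "a' \<le> a" "b \<le> b'"
      using same_side[OF True] by linarith
    then show ?thesis
    proof cases
      case 1
      then show ?thesis using assms by auto
    next
      case 2
      then show ?thesis
        using nested_parabolas_meet_on_axis[OF 2] eq same_side[OF True] assms by simp
    next
      case 3
      then show ?thesis
        using nested_parabolas_meet_on_axis[OF 3, of x] eq same_side[OF True] assms by auto
    qed
  qed
  then show ?thesis by auto
qed

lemma parabolic_arc_meets_axis:
  assumes "a < b" "plane_point x 0 \<in> path_image (parabolic_arc a b upper)"
  shows "x \<in> {a, b}"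
proof -
  obtain x' where "a \<le> x'" "x' \<le> b"
    "plane_point x 0 = plane_point x' (side_sign upper * ((x' - a) * (b - x')))"
    using path_image_parabolic_arc[OF assms] by blast
  then show ?thesis
    by auto
qed

lemma parabolic_arcs_meet_at_common_ends:
  assumes "a < b" "a' < b'"
    and same_side: "upper = upper' \<Longrightarrow>
      (a, b) \<noteq> (a', b') \<and> \<not> (a < a' \<and> a' < b \<and> b < b') \<and> \<not> (a' < a \<and> a < b' \<and> b' < b)"
  shows "path_image (parabolic_arc a b upper) \<inter> path_image (parabolic_arc a' b' upper')
    \<subseteq> (\<lambda>x. plane_point x 0) ` ({a, b} \<inter> {a', b'})"
proof
  fix z assume z: "z \<in> path_image (parabolic_arc a b upper) \<inter> path_image (parabolic_arc a' b' upper')"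
  obtain x where x: "a \<le> x" "x \<le> b" "z = plane_point x (side_sign upper * ((x - a) * (b - x)))"
    using path_image_parabolic_arc[OF assms(1)] z by blast
  obtain x' where x': "a' \<le> x'" "x' \<le> b'"
    "z = plane_point x' (side_sign upper' * ((x' - a') * (b' - x')))"
    using path_image_parabolic_arc[OF assms(2)] z by blast
  have "x' = x"
    using x x' by simp
  then have "side_sign upper * ((x - a) * (b - x)) = side_sign upper' * ((x - a') * (b' - x))"
    using x(3) x'(3) by simp
  then have "x \<in> {a, b} \<and> x \<in> {a', b'}"
    using parabola_heights_eq_only_at_ends[OF assms(1,2) x(1,2)] x'(1,2) \<open>x' = x\<close> same_side
    by blast
  then show "z \<in> (\<lambda>x. plane_point x 0) ` ({a, b} \<inter> {a', b'})"
    using x(3) by auto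
qed

lemma inj_on_image_eq_doubletonE:
  assumes inj: "inj_on f A" and image: "f ` A = {x, y}"
  obtains u v where "A = {u, v}" "f u = x" "f v = y"
proof -
  have "x \<in> f ` A" "y \<in> f ` A"
    using image by simp_all
  then obtain u v where uv: "x = f u" "u \<in> A" "y = f v" "v \<in> A"
    by (elim imageE)
  have "w \<in> {u, v}" if "w \<in> A" for w
  proof -
    have "f w \<in> {f u, f v}"
      using imageI[OF that, of f] image uv(1,3) by simp
    then show ?thesis
      using inj_onD[OF inj, of w u] inj_onD[OF inj, of w v] that uv(2,4) by blast
  qed
  then have "A = {u, v}"
    using uv(2,4) by blast
  then show thesis
    using that uv(1,3) by simp
qed

lemma planar_graph_if_book_drawing:
  fixes pos :: "'a \<Rightarrow> real" and a b :: "'a set \<Rightarrow> real" and upper :: "'a set \<Rightarrow> bool"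
  assumes inj: "inj_on pos V"
    and edge: "\<And>e. e \<in> E \<Longrightarrow> e \<subseteq> V \<and> pos ` e = {a e, b e} \<and> a e < b e"
    and no_crossing: "\<And>e e'. e \<in> E \<Longrightarrow> e' \<in> E \<Longrightarrow> upper e = upper e' \<Longrightarrow>
      \<not> (a e < a e' \<and> a e' < b e \<and> b e < b e')"
  shows "planar_graph V E"
proof -
  define pt where "pt w = plane_point (pos w) 0" for w
  define crv where "crv e = parabolic_arc (a e) (b e) (upper e)" for e
  have vertices: "inj_on pt V"
    using inj by (auto simp: inj_on_def pt_def)
  have arcs: "\<forall>e\<in>E. \<exists>u v. e = {u, v} \<and> u \<noteq> v \<and> arc (crv e) \<and>
      pathstart (crv e) = pt u \<and> pathfinish (crv e) = pt v"
  proof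
    fix e assume e: "e \<in> E"
    then have "inj_on pos e"
      using edge inj_on_subset[OF inj] by blast
    then obtain u v where "e = {u, v}" "pos u = a e" "pos v = b e"
      using edge[OF e] by (elim inj_on_image_eq_doubletonE) simp
    then show "\<exists>u v. e = {u, v} \<and> u \<noteq> v \<and> arc (crv e) \<and>
        pathstart (crv e) = pt u \<and> pathfinish (crv e) = pt v"
      using edge[OF e]
      by (intro exI[of _ u] exI[of _ v]) (auto simp: crv_def pt_def arc_parabolic_arc)
  qed
  have vertices_off_arcs: "\<forall>e\<in>E. \<forall>w\<in>V. pt w \<in> path_image (crv e) \<longrightarrow> w \<in> e"
  proof (intro ballI impI)
    fix e w assume e: "e \<in> E" and w: "w \<in> V" "pt w \<in> path_image (crv e)"
    have "pos w \<in> pos ` e"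
      using parabolic_arc_meets_axis[of "a e" "b e" "pos w" "upper e"] edge[OF e] w(2)
      by (simp add: pt_def crv_def)
    then show "w \<in> e"
      using inj_on_image_mem_iff[OF inj w(1)] edge[OF e] by blast
  qed
  have arcs_meet: "\<forall>e\<in>E. \<forall>e'\<in>E. e \<noteq> e' \<longrightarrow>
      path_image (crv e) \<inter> path_image (crv e') \<subseteq> pt ` (e \<inter> e')"
  proof (intro ballI impI)
    fix e e' assume e: "e \<in> E" "e' \<in> E" "e \<noteq> e'"
    have "pos ` e \<noteq> pos ` e'"
      using e edge inj_on_image_eq_iff[OF inj, of e e'] by simp
    then have "(a e, b e) \<noteq> (a e', b e')"
      using edge e by auto
    then have "path_image (crv e) \<inter> path_image (crv e') \<subseteq> (\<lambda>x. plane_point x 0) ` ({a e, b e} \<inter> {a e', b e'})"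
      unfolding crv_def using edge[OF e(1)] edge[OF e(2)] no_crossing[OF e(1,2)] no_crossing[OF e(2,1)]
      by (intro parabolic_arcs_meet_at_common_ends) auto
    also have "{a e, b e} \<inter> {a e', b e'} = pos ` (e \<inter> e')"
      using inj_on_image_Int[OF inj] edge e by simp
    finally show "path_image (crv e) \<inter> path_image (crv e') \<subseteq> pt ` (e \<inter> e')"
      by (simp add: pt_def image_image)
  qed
  show ?thesis
    unfolding planar_graph_def
    using vertices arcs vertices_off_arcs arcs_meet by (intro exI[of _ pt] exI[of _ crv]) simp
qed

lemma planar_graph_if_two_page_book_embedding:
  fixes pos :: "'a \<Rightarrow> real" and lo hi :: "'r \<Rightarrow> 'a" and upper :: "'r \<Rightarrow> bool"
  assumes inj: "inj_on pos V"
    and edges: "E \<subseteq> (\<lambda>r. {lo r, hi r}) ` R"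
    and ends: "\<And>r. r \<in> R \<Longrightarrow> lo r \<in> V \<and> hi r \<in> V \<and> pos (lo r) < pos (hi r)"
    and no_crossing: "\<And>r r'. r \<in> R \<Longrightarrow> r' \<in> R \<Longrightarrow> upper r = upper r' \<Longrightarrow>
      \<not> (pos (lo r) < pos (lo r') \<and> pos (lo r') < pos (hi r) \<and> pos (hi r) < pos (hi r'))"
  shows "planar_graph V E"
proof -
  have "\<forall>e\<in>E. \<exists>r\<in>R. {lo r, hi r} = e"
    using edges by blast
  then obtain rep where rep_mem: "\<And>e. e \<in> E \<Longrightarrow> rep e \<in> R"
    and rep_eq: "\<And>e. e \<in> E \<Longrightarrow> {lo (rep e), hi (rep e)} = e"
    by metis
  show ?thesis
  proof (rule planar_graph_if_book_drawing[OF inj, where a = "\<lambda>e. pos (lo (rep e))"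
        and b = "\<lambda>e. pos (hi (rep e))" and upper = "\<lambda>e. upper (rep e)"])
    fix e assume "e \<in> E"
    then have "e = {lo (rep e), hi (rep e)}" "rep e \<in> R"
      using rep_eq rep_mem by simp_all
    then show "e \<subseteq> V \<and> pos ` e = {pos (lo (rep e)), pos (hi (rep e))} \<and> pos (lo (rep e)) < pos (hi (rep e))"
      using ends by (metis empty_subsetI image_empty image_insert insert_subset)
  next
    fix e e' assume "e \<in> E" "e' \<in> E" "upper (rep e) = upper (rep e')"
    then show "\<not> (pos (lo (rep e)) < pos (lo (rep e')) \<and> pos (lo (rep e')) < pos (hi (rep e)) \<and>
        pos (hi (rep e)) < pos (hi (rep e')))"
      using no_crossing rep_mem by blast
  qed
qed

definition cycle_vertex :: "nat \<Rightarrow> nat \<Rightarrow> (nat \<times> nat) \<times> nat" where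
  "cycle_vertex k j = ((k mod 3, j), k mod 2)"

definition vertex_class :: "(nat \<times> nat) \<times> nat \<Rightarrow> nat" where
  "vertex_class v = (4 * fst (fst v) + 3 * snd v) mod 6"

definition cycle_edge :: "nat \<Rightarrow> nat \<Rightarrow> nat \<Rightarrow> ((nat \<times> nat) \<times> nat) set" where
  "cycle_edge k j j' = {cycle_vertex k j, cycle_vertex ((k + 1) mod 6) j'}"

lemma less_6_cases: "(k::nat) < 6 \<Longrightarrow> k = 0 \<or> k = 1 \<or> k = 2 \<or> k = 3 \<or> k = 4 \<or> k = 5"
  by auto

lemma mult_add_eq_mult_add_iff:
  fixes B :: nat
  assumes "a < B" "a' < B"
  shows "k * B + a = k' * B + a' \<longleftrightarrow> k = k' \<and> a = a'"
proof
  assume eq: "k * B + a = k' * B + a'"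
  have "k = (k * B + a) div B" "k' = (k' * B + a') div B"
    using assms by simp_all
  then have "k = k'"
    using eq by simp
  then show "k = k' \<and> a = a'"
    using eq by simp
qed simp

lemma vertex_class_cycle_vertex [simp]: "k < 6 \<Longrightarrow> vertex_class (cycle_vertex k j) = k"
  unfolding vertex_class_def cycle_vertex_def by (auto dest!: less_6_cases)

lemma vertex_index_cycle_vertex [simp]: "snd (fst (cycle_vertex k j)) = j"
  by (simp add: cycle_vertex_def)

lemma vertex_class_less_6: "vertex_class v < 6"
  by (simp add: vertex_class_def)

lemma cycle_vertex_vertex_class:
  assumes "i < 3" "b < 2"
  shows "cycle_vertex (vertex_class ((i, j), b)) j = ((i, j), b)"
proof -
  have "i = 0 \<or> i = 1 \<or> i = 2" "b = 0 \<or> b = 1"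
    using assms by auto
  then show ?thesis
    by (elim disjE) (simp_all add: vertex_class_def cycle_vertex_def)
qed

lemma cycle_vertex_eq_iff:
  "k < 6 \<Longrightarrow> k' < 6 \<Longrightarrow> cycle_vertex k j = cycle_vertex k' j' \<longleftrightarrow> k = k' \<and> j = j'"
  by (metis vertex_class_cycle_vertex vertex_index_cycle_vertex)

lemma kron_vertices_Knnn_K2:
  "kron_vertices (Knnn_vertices n) K2_vertices = {cycle_vertex k j | k j. k < 6 \<and> j < n}"
proof (intro set_eqI iffI)
  fix v assume "v \<in> kron_vertices (Knnn_vertices n) K2_vertices"
  then obtain i j b where v: "v = ((i, j), b)" "i < 3" "j < n" "b < 2"
    by (auto simp: kron_vertices_def Knnn_vertices_def K2_vertices_def)
  then have "v = cycle_vertex (vertex_class v) j"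
    using cycle_vertex_vertex_class by simp
  then show "v \<in> {cycle_vertex k j | k j. k < 6 \<and> j < n}"
    using vertex_class_less_6 v(3) by blast
qed (auto simp: kron_vertices_def Knnn_vertices_def K2_vertices_def cycle_vertex_def)

lemma consecutive_mod_6:
  "(k::nat) < 6 \<Longrightarrow> k' < 6 \<Longrightarrow> k mod 3 \<noteq> k' mod 3 \<Longrightarrow> k mod 2 \<noteq> k' mod 2
    \<Longrightarrow> k' = (k + 1) mod 6 \<or> k = (k' + 1) mod 6"
  by (auto dest!: less_6_cases)

lemma cycle_edge_in_kron_edges:
  assumes "k < 6" "j < n" "j' < n"
  shows "cycle_edge k j j' \<in> kron_edges (Knnn_edges n) K2_edges"
proof -
  have classes: "k mod 3 \<noteq> (k + 1) mod 6 mod 3" "{k mod 2, (k + 1) mod 6 mod 2} = {0, 1}"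
    using assms(1) by (auto dest!: less_6_cases)
  have "{(k mod 3, j), ((k + 1) mod 6 mod 3, j')} \<in> Knnn_edges n"
    using classes(1) assms unfolding Knnn_edges_def Knnn_vertices_def by fastforce
  then show ?thesis
    using classes(2) unfolding kron_edges_def K2_edges_def cycle_edge_def cycle_vertex_def by blast
qed

lemma kron_edges_Knnn_K2:
  "kron_edges (Knnn_edges n) K2_edges = {cycle_edge k j j' | k j j'. k < 6 \<and> j < n \<and> j' < n}"
proof (intro set_eqI iffI)
  fix e assume "e \<in> kron_edges (Knnn_edges n) K2_edges"
  then obtain g h g' h' where e: "e = {(g, h), (g', h')}" "{g, g'} \<in> Knnn_edges n" "{h, h'} = {0, 1}"
    unfolding kron_edges_def K2_edges_def by blast
  obtain u u' where "{g, g'} = {u, u'}" "u \<in> Knnn_vertices n" "u' \<in> Knnn_vertices n" "fst u \<noteq> fst u'"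
    using e(2) unfolding Knnn_edges_def by blast
  then have "g \<in> Knnn_vertices n" "g' \<in> Knnn_vertices n" "fst g \<noteq> fst g'"
    by (auto simp: doubleton_eq_iff)
  moreover obtain i j i' j' where "g = (i, j)" "g' = (i', j')"
    by (metis surj_pair)
  moreover have "h < 2" "h' < 2" "h \<noteq> h'"
    using e(3) by (auto simp: doubleton_eq_iff)
  ultimately have e: "e = {((i, j), h), ((i', j'), h')}"
    "i < 3" "i' < 3" "j < n" "j' < n" "i \<noteq> i'" "h < 2" "h' < 2" "h \<noteq> h'"
    using e(1) by (auto simp: Knnn_vertices_def)
  define k where "k = vertex_class ((i, j), h)"
  define k' where "k' = vertex_class ((i', j'), h')"
  have v: "cycle_vertex k j = ((i, j), h)" "cycle_vertex k' j' = ((i', j'), h')"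
    using e cycle_vertex_vertex_class by (simp_all add: k_def k'_def)
  have "k < 6" "k' < 6"
    by (simp_all add: k_def k'_def vertex_class_less_6)
  moreover have "k mod 3 \<noteq> k' mod 3" "k mod 2 \<noteq> k' mod 2"
    using v e by (auto simp: cycle_vertex_def)
  ultimately consider "k' = (k + 1) mod 6" | "k = (k' + 1) mod 6"
    using consecutive_mod_6 by blast
  then have "e = cycle_edge k j j' \<or> e = cycle_edge k' j' j"
    by cases (simp_all add: e(1) v[symmetric] cycle_edge_def insert_commute)
  then show "e \<in> {cycle_edge k j j' | k j j'. k < 6 \<and> j < n \<and> j' < n}"
    using \<open>k < 6\<close> \<open>k' < 6\<close> e by blast
qed (use cycle_edge_in_kron_edges in blast)

lemma cycle_edge_eq_iff:
  assumes "k < 6" "k' < 6"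
  shows "cycle_edge k j j2 = cycle_edge k' j' j2' \<longleftrightarrow> k = k' \<and> j = j' \<and> j2 = j2'"
proof
  assume eq: "cycle_edge k j j2 = cycle_edge k' j' j2'"
  have succ: "(k + 1) mod 6 < 6" "(k' + 1) mod 6 < 6"
    by simp_all
  have "\<not> (k = (k' + 1) mod 6 \<and> (k + 1) mod 6 = k')"
    using assms by presburger
  then show "k = k' \<and> j = j' \<and> j2 = j2'"
    using eq assms succ by (auto simp: cycle_edge_def doubleton_eq_iff cycle_vertex_eq_iff)
qed simp

definition layer_index :: "nat \<Rightarrow> nat \<Rightarrow> nat \<Rightarrow> nat" where
  "layer_index p j j' = (if j div 2 = j' div 2 \<and> j \<noteq> j' then 2 * p else j div 2)"

definition layer :: "nat \<Rightarrow> nat \<Rightarrow> ((nat \<times> nat) \<times> nat) set set" where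
  "layer p i = {cycle_edge k j j' | k j j'. k < 6 \<and> j < 4 * p \<and> j' < 4 * p \<and> layer_index p j j' = i}"

datatype fan_edge = Left_fan nat nat | Right_fan nat nat | Rim nat nat

fun fan_lo :: "nat \<Rightarrow> fan_edge \<Rightarrow> (nat \<times> nat) \<times> nat" where
  "fan_lo t (Left_fan k x) = cycle_vertex k (2 * t + k mod 2)"
| "fan_lo t (Right_fan k x) = cycle_vertex ((k + 1) mod 6) x"
| "fan_lo t (Rim k c) = cycle_vertex (min k ((k + 1) mod 6)) (2 * t + c)"

fun fan_hi :: "nat \<Rightarrow> fan_edge \<Rightarrow> (nat \<times> nat) \<times> nat" where
  "fan_hi t (Left_fan k x) = cycle_vertex ((k + 1) mod 6) x"
| "fan_hi t (Right_fan k x) = cycle_vertex k (2 * t + (k + 1) mod 2)"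
| "fan_hi t (Rim k c) = cycle_vertex (max k ((k + 1) mod 6)) (2 * t + c)"

fun fan_upper :: "fan_edge \<Rightarrow> bool" where
  "fan_upper (Left_fan k x) = False"
| "fan_upper (Right_fan k x) = True"
| "fan_upper (Rim k c) = (c = 1 \<and> odd k)"

definition fan_edges :: "nat \<Rightarrow> nat \<Rightarrow> fan_edge set" where
  "fan_edges p t =
     {Left_fan k x | k x. k < 6 \<and> x < 4 * p \<and> x div 2 \<noteq> t} \<union>
     {Right_fan k x | k x. k < 6 \<and> x < 4 * p \<and> x div 2 \<noteq> t} \<union>
     {Rim k c | k c. k < 6 \<and> c < 2}"

definition hub_slot :: "nat \<Rightarrow> nat \<Rightarrow> nat \<Rightarrow> nat" where
  "hub_slot p k c = k * (4 * p + 2) + (if c = k mod 2 then 0 else 4 * p + 1)"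

text \<open>Layout of layer t, whose hubs are the vertices 2t and 2t+1 of every class: the line is
cut into six blocks of length 4p+2; block k starts with the hub of class k of parity k, ends with
its other hub, and holds the remaining vertices of class k+1 in between.\<close>

definition fan_slot :: "nat \<Rightarrow> nat \<Rightarrow> nat \<Rightarrow> nat \<Rightarrow> nat" where
  "fan_slot p t k j =
     (if j div 2 = t then hub_slot p k (j mod 2) else ((k + 5) mod 6) * (4 * p + 2) + (1 + j))"

definition fan_position :: "nat \<Rightarrow> nat \<Rightarrow> (nat \<times> nat) \<times> nat \<Rightarrow> real" where
  "fan_position p t v = real (fan_slot p t (vertex_class v) (snd (fst v)))"

fun fan_lo_slot :: "nat \<Rightarrow> fan_edge \<Rightarrow> nat" where
  "fan_lo_slot p (Left_fan k x) = hub_slot p k (k mod 2)"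
| "fan_lo_slot p (Right_fan k x) = k * (4 * p + 2) + (1 + x)"
| "fan_lo_slot p (Rim k c) = hub_slot p (min k ((k + 1) mod 6)) c"

fun fan_hi_slot :: "nat \<Rightarrow> fan_edge \<Rightarrow> nat" where
  "fan_hi_slot p (Left_fan k x) = k * (4 * p + 2) + (1 + x)"
| "fan_hi_slot p (Right_fan k x) = hub_slot p k ((k + 1) mod 2)"
| "fan_hi_slot p (Rim k c) = hub_slot p (max k ((k + 1) mod 6)) c"

lemma fan_slot_hub: "j div 2 = t \<Longrightarrow> fan_slot p t k j = hub_slot p k (j mod 2)"
  and fan_slot_other: "j div 2 \<noteq> t \<Longrightarrow> fan_slot p t k j = ((k + 5) mod 6) * (4 * p + 2) + (1 + j)"
  by (simp_all add: fan_slot_def)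

lemma hub_slot_eq_iff:
  assumes "c < 2" "c' < 2"
  shows "hub_slot p k c = hub_slot p k' c' \<longleftrightarrow> k = k' \<and> c = c'"
proof
  define off where "off k c = (if c = k mod 2 then 0 else 4 * p + 1)" for k c :: nat
  assume "hub_slot p k c = hub_slot p k' c'"
  then have "k * (4 * p + 2) + off k c = k' * (4 * p + 2) + off k' c'"
    by (simp only: hub_slot_def off_def)
  moreover have "off k c < 4 * p + 2" "off k' c' < 4 * p + 2"
    by (simp_all add: off_def)
  ultimately have "k = k' \<and> off k c = off k' c'"
    by (simp only: mult_add_eq_mult_add_iff) blast
  moreover from this have "c = c'"
    using assms by (simp add: off_def split: if_splits; presburger)
  ultimately show "k = k' \<and> c = c'"
    by simp
qed simp

lemma hub_slot_neq_other:
  assumes "j < 4 * p"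
  shows "hub_slot p k c \<noteq> m * (4 * p + 2) + (1 + j)"
proof
  define off where "off = (if c = k mod 2 then 0 else 4 * p + 1)"
  assume "hub_slot p k c = m * (4 * p + 2) + (1 + j)"
  then have "k * (4 * p + 2) + off = m * (4 * p + 2) + (1 + j)"
    by (simp only: hub_slot_def off_def)
  moreover have "off < 4 * p + 2" "1 + j < 4 * p + 2"
    using assms by (simp_all add: off_def)
  ultimately have "off = 1 + j"
    by (simp only: mult_add_eq_mult_add_iff)
  then show False
    using assms by (simp add: off_def split: if_splits)
qed

lemma fan_slot_inj:
  assumes "k < 6" "k' < 6" "j < 4 * p" "j' < 4 * p" "fan_slot p t k j = fan_slot p t k' j'"
  shows "k = k' \<and> j = j'"
proof -
  consider (hubs) "j div 2 = t" "j' div 2 = t" | (others) "j div 2 \<noteq> t" "j' div 2 \<noteq> t"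
    | (mixed) "j div 2 = t" "j' div 2 \<noteq> t" | (mixed') "j div 2 \<noteq> t" "j' div 2 = t"
    by blast
  then show ?thesis
  proof cases
    case hubs
    then have "hub_slot p k (j mod 2) = hub_slot p k' (j' mod 2)"
      using assms(5) by (simp only: fan_slot_hub[OF hubs(1)] fan_slot_hub[OF hubs(2)])
    then have "k = k' \<and> j mod 2 = j' mod 2"
      using hub_slot_eq_iff[of "j mod 2" "j' mod 2"] by simp
    then show ?thesis
      using hubs div_mult_mod_eq[of j 2] div_mult_mod_eq[of j' 2] by metis
  next
    case others
    then have "((k + 5) mod 6) * (4 * p + 2) + (1 + j) = ((k' + 5) mod 6) * (4 * p + 2) + (1 + j')"
      using assms(5) by (simp only: fan_slot_other[OF others(1)] fan_slot_other[OF others(2)])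
    moreover have "1 + j < 4 * p + 2" "1 + j' < 4 * p + 2"
      using assms(3,4) by simp_all
    ultimately have "(k + 5) mod 6 = (k' + 5) mod 6 \<and> j = j'"
      by (simp only: mult_add_eq_mult_add_iff) simp
    then show ?thesis
      using assms(1,2) by (auto dest!: less_6_cases)
  next
    case mixed
    then have "hub_slot p k (j mod 2) = ((k' + 5) mod 6) * (4 * p + 2) + (1 + j')"
      using assms(5) by (simp only: fan_slot_hub[OF mixed(1)] fan_slot_other[OF mixed(2)])
    then show ?thesis
      using hub_slot_neq_other[OF assms(4)] by blast
  next
    case mixed'
    then have "hub_slot p k' (j' mod 2) = ((k + 5) mod 6) * (4 * p + 2) + (1 + j)"
      using assms(5) by (simp only: fan_slot_hub[OF mixed'(2)] fan_slot_other[OF mixed'(1)])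
    then show ?thesis
      using hub_slot_neq_other[OF assms(3)] by blast
  qed
qed

lemma layer_subset_fan_edges:
  assumes "t < 2 * p"
  shows "layer p t \<subseteq> (\<lambda>r. {fan_lo t r, fan_hi t r}) ` fan_edges p t"
proof
  fix e assume "e \<in> layer p t"
  then obtain k j j' where e: "e = cycle_edge k j j'" "k < 6" "j < 4 * p" "j' < 4 * p"
    "layer_index p j j' = t"
    unfolding layer_def by blast
  have j: "j div 2 = t" "j' div 2 = t \<Longrightarrow> j' = j"
    using e(5) assms by (auto simp: layer_index_def split: if_splits)
  have "j = 2 * t + j mod 2"
    using j(1) div_mult_mod_eq[of j 2] by linarith
  moreover have "j mod 2 = k mod 2 \<or> j mod 2 = (k + 1) mod 2"
    by presburger
  ultimately consider "j' div 2 \<noteq> t" "j = 2 * t + k mod 2" | "j' div 2 \<noteq> t" "j = 2 * t + (k + 1) mod 2"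
    | "j' = 2 * t + j mod 2" "j = j'"
    using j(2) by fastforce
  then show "e \<in> (\<lambda>r. {fan_lo t r, fan_hi t r}) ` fan_edges p t"
  proof cases
    case 1
    then have "e = {fan_lo t (Left_fan k j'), fan_hi t (Left_fan k j')}" "Left_fan k j' \<in> fan_edges p t"
      using e by (simp_all add: cycle_edge_def fan_edges_def)
    then show ?thesis by blast
  next
    case 2
    then have "e = {fan_lo t (Right_fan k j'), fan_hi t (Right_fan k j')}" "Right_fan k j' \<in> fan_edges p t"
      using e by (simp_all add: cycle_edge_def fan_edges_def insert_commute)
    then show ?thesis by blast
  next
    case 3
    then have "e = {fan_lo t (Rim k (j mod 2)), fan_hi t (Rim k (j mod 2))}" "Rim k (j mod 2) \<in> fan_edges p t"
      using e by (auto simp: cycle_edge_def fan_edges_def min_def max_def insert_commute)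
    then show ?thesis by blast
  qed
qed

lemma fan_edge_ends:
  assumes "t < 2 * p" "r \<in> fan_edges p t"
  shows "fan_lo t r \<in> {cycle_vertex k j | k j. k < 6 \<and> j < 4 * p} \<and>
      fan_hi t r \<in> {cycle_vertex k j | k j. k < 6 \<and> j < 4 * p} \<and>
      fan_position p t (fan_lo t r) = fan_lo_slot p r \<and> fan_position p t (fan_hi t r) = fan_hi_slot p r"
proof -
  have mem: "cycle_vertex k j \<in> {cycle_vertex k j | k j. k < 6 \<and> j < 4 * p}" if "k < 6" "j < 4 * p" for k j
    using that by blast
  have hub: "2 * t + c < 4 * p" "(2 * t + c) div 2 = t" "(2 * t + c) mod 2 = c" if "c < 2" for c
    using assms(1) that by auto
  have pred: "((k + 1) mod 6 + 5) mod 6 = k" if "k < 6" for k :: nat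
    using that by (auto dest!: less_6_cases)
  show ?thesis
    using assms(2) unfolding fan_edges_def
  proof (elim UnE CollectE exE conjE)
    fix k x assume r: "r = Left_fan k x" "k < 6" "x < 4 * p" "x div 2 \<noteq> t"
    have "k mod 2 < 2"
      by simp
    with r show ?thesis
      using hub[of "k mod 2"] pred[OF r(2)] mem by (simp add: fan_position_def fan_slot_def)
  next
    fix k x assume r: "r = Right_fan k x" "k < 6" "x < 4 * p" "x div 2 \<noteq> t"
    have "(k + 1) mod 2 < 2"
      by simp
    with r show ?thesis
      using hub[of "(k + 1) mod 2"] pred[OF r(2)] mem by (simp add: fan_position_def fan_slot_def)
  next
    fix k c assume r: "r = Rim k c" "k < 6" "c < 2"
    have "min k ((k + 1) mod 6) < 6" "max k ((k + 1) mod 6) < 6"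
      using r(2) by simp_all
    with r show ?thesis
      using hub[OF r(3)] mem by (simp add: fan_position_def fan_slot_def)
  qed
qed

lemma fan_lo_slot_less_hi_slot: "r \<in> fan_edges p t \<Longrightarrow> fan_lo_slot p r < fan_hi_slot p r"
  unfolding fan_edges_def by (auto simp: hub_slot_def dest!: less_6_cases)

lemma fan_edges_no_crossing:
  assumes "r \<in> fan_edges p t" "r' \<in> fan_edges p t" "fan_upper r = fan_upper r'"
  shows "\<not> (fan_lo_slot p r < fan_lo_slot p r' \<and> fan_lo_slot p r' < fan_hi_slot p r \<and>
    fan_hi_slot p r < fan_hi_slot p r')"
proof -
  have kinds: "\<exists>k x. k < 6 \<and> ((r = Left_fan k x \<or> r = Right_fan k x) \<and> x < 4 * p \<or> r = Rim k x \<and> x < 2)"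
    if "r \<in> fan_edges p t" for r
    using that unfolding fan_edges_def by auto
  obtain k x k' x' where
    r: "k < 6" "(r = Left_fan k x \<or> r = Right_fan k x) \<and> x < 4 * p \<or> r = Rim k x \<and> x < 2" and
    r': "k' < 6" "(r' = Left_fan k' x' \<or> r' = Right_fan k' x') \<and> x' < 4 * p \<or> r' = Rim k' x' \<and> x' < 2"
    using kinds[OF assms(1)] kinds[OF assms(2)] by blast
  show ?thesis
    using r(2) r'(2) less_6_cases[OF r(1)] less_6_cases[OF r'(1)] assms(3)
    by (elim disjE conjE; simp add: hub_slot_def less_2_cases_iff; linarith?)
qed

lemma inj_on_fan_position: "inj_on (fan_position p t) {cycle_vertex k j | k j. k < 6 \<and> j < 4 * p}"
proof (rule inj_onI)
  fix u v
  assume "u \<in> {cycle_vertex k j | k j. k < 6 \<and> j < 4 * p}"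
    and "v \<in> {cycle_vertex k j | k j. k < 6 \<and> j < 4 * p}"
  then obtain k j k' j' where "u = cycle_vertex k j" "v = cycle_vertex k' j'"
    "k < 6" "j < 4 * p" "k' < 6" "j' < 4 * p"
    by blast
  moreover assume "fan_position p t u = fan_position p t v"
  ultimately show "u = v"
    using fan_slot_inj[of k k' j p j' t] by (simp add: fan_position_def)
qed

lemma planar_fan_layer:
  assumes "t < 2 * p"
  shows "planar_graph (kron_vertices (Knnn_vertices (4 * p)) K2_vertices) (layer p t)"
  unfolding kron_vertices_Knnn_K2
proof (rule planar_graph_if_two_page_book_embedding[OF inj_on_fan_position layer_subset_fan_edges[OF assms],
      where upper = fan_upper])
  fix r assume "r \<in> fan_edges p t"
  then show "fan_lo t r \<in> {cycle_vertex k j | k j. k < 6 \<and> j < 4 * p} \<and>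
      fan_hi t r \<in> {cycle_vertex k j | k j. k < 6 \<and> j < 4 * p} \<and>
      fan_position p t (fan_lo t r) < fan_position p t (fan_hi t r)"
    using fan_edge_ends[OF assms] fan_lo_slot_less_hi_slot by simp
next
  fix r r' assume "r \<in> fan_edges p t" "r' \<in> fan_edges p t" "fan_upper r = fan_upper r'"
  then show "\<not> (fan_position p t (fan_lo t r) < fan_position p t (fan_lo t r') \<and>
      fan_position p t (fan_lo t r') < fan_position p t (fan_hi t r) \<and>
      fan_position p t (fan_hi t r) < fan_position p t (fan_hi t r'))"
    using fan_edge_ends[OF assms] fan_edges_no_crossing by simp
qed

definition flip_parity :: "nat \<Rightarrow> nat \<Rightarrow> nat" where
  "flip_parity j k = 2 * (j div 2) + (j + k) mod 2"

definition hexagon_vertex :: "nat \<Rightarrow> nat \<Rightarrow> (nat \<times> nat) \<times> nat" where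
  "hexagon_vertex q k = cycle_vertex k (flip_parity q k)"

fun hexagon_lo :: "nat \<times> nat \<Rightarrow> (nat \<times> nat) \<times> nat" where
  "hexagon_lo (q, k) = hexagon_vertex q (min k ((k + 1) mod 6))"

fun hexagon_hi :: "nat \<times> nat \<Rightarrow> (nat \<times> nat) \<times> nat" where
  "hexagon_hi (q, k) = hexagon_vertex q (max k ((k + 1) mod 6))"

definition hexagon_slot :: "(nat \<times> nat) \<times> nat \<Rightarrow> nat" where
  "hexagon_slot v = flip_parity (snd (fst v)) (vertex_class v) * 6 + vertex_class v"

lemma flip_parity_div_2 [simp]: "flip_parity j k div 2 = j div 2"
  and flip_parity_mod_2: "flip_parity j k mod 2 = (j + k) mod 2"
  by (simp_all add: flip_parity_def)

lemma flip_parity_flip_parity [simp]: "flip_parity (flip_parity j k) k = j"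
proof -
  have "(flip_parity j k + k) mod 2 = j mod 2"
    unfolding flip_parity_def by (simp add: mod_2_eq_odd)
  then show ?thesis
    by (simp add: flip_parity_def)
qed

lemma flip_parity_less:
  assumes "j < 4 * p"
  shows "flip_parity j k < 4 * p"
proof -
  have "j div 2 < 2 * p" "(j + k) mod 2 \<le> 1"
    using assms by auto
  then show ?thesis
    unfolding flip_parity_def by linarith
qed

lemma hexagon_slot_hexagon_vertex [simp]: "k < 6 \<Longrightarrow> hexagon_slot (hexagon_vertex q k) = q * 6 + k"
  by (simp add: hexagon_slot_def hexagon_vertex_def)

lemma hexagon_vertex_mem:
  "q < 4 * p \<Longrightarrow> k < 6 \<Longrightarrow> hexagon_vertex q k \<in> {cycle_vertex k j | k j. k < 6 \<and> j < 4 * p}"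
  unfolding hexagon_vertex_def using flip_parity_less by blast

lemma layer_subset_hexagon_edges:
  "layer p (2 * p) \<subseteq> (\<lambda>r. {hexagon_lo r, hexagon_hi r}) ` ({..<4 * p} \<times> {..<6})"
proof
  fix e assume "e \<in> layer p (2 * p)"
  then obtain k j j' where e: "e = cycle_edge k j j'" "k < 6" "j < 4 * p" "j' < 4 * p"
    "layer_index p j j' = 2 * p"
    unfolding layer_def by blast
  have twins: "j div 2 = j' div 2" "j \<noteq> j'"
    using e(3,5) by (auto simp: layer_index_def split: if_splits)
  define q where "q = flip_parity j k"
  have "j mod 2 \<noteq> j' mod 2"
    using twins by (metis div_mult_mod_eq)
  then have "j' mod 2 = (j + 1) mod 2"
    by presburger
  also have "\<dots> = ((j + k) mod 2 + (k + 1) mod 2) mod 2"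
    by (simp add: mod_add_eq) presburger
  also have "\<dots> = (q mod 2 + (k + 1) mod 6 mod 2) mod 2"
    using mod_mod_cancel[of 2 6 "k + 1"] by (simp add: q_def flip_parity_mod_2)
  also have "\<dots> = (q + (k + 1) mod 6) mod 2"
    by (simp only: mod_add_eq)
  finally have "flip_parity q ((k + 1) mod 6) = j'"
    using twins(1) div_mult_mod_eq[of j' 2] div_mult_mod_eq[of "flip_parity q ((k + 1) mod 6)" 2]
    by (simp add: q_def flip_parity_mod_2)
  then have "e = {hexagon_vertex q k, hexagon_vertex q ((k + 1) mod 6)}"
    by (simp add: e(1) cycle_edge_def hexagon_vertex_def q_def)
  then have "e = {hexagon_lo (q, k), hexagon_hi (q, k)}"
    by (auto simp: min_def max_def)
  moreover have "(q, k) \<in> {..<4 * p} \<times> {..<6}"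
    using e(2,3) by (simp add: q_def flip_parity_less)
  ultimately show "e \<in> (\<lambda>r. {hexagon_lo r, hexagon_hi r}) ` ({..<4 * p} \<times> {..<6})"
    by blast
qed

lemma inj_on_hexagon_slot:
  "inj_on (\<lambda>v. real (hexagon_slot v)) {cycle_vertex k j | k j. k < 6 \<and> j < 4 * p}"
proof (rule inj_onI)
  fix u v
  assume "u \<in> {cycle_vertex k j | k j. k < 6 \<and> j < 4 * p}" "v \<in> {cycle_vertex k j | k j. k < 6 \<and> j < 4 * p}"
  then obtain k j k' j' where uv: "u = hexagon_vertex (flip_parity j k) k" "v = hexagon_vertex (flip_parity j' k') k'"
    "k < 6" "k' < 6"
    by (auto simp: hexagon_vertex_def)
  moreover assume "real (hexagon_slot u) = real (hexagon_slot v)"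
  then have "hexagon_slot u = hexagon_slot v"
    by (simp only: of_nat_eq_iff)
  ultimately have "flip_parity j k * 6 + k = flip_parity j' k' * 6 + k'"
    by simp
  then show "u = v"
    using mult_add_eq_mult_add_iff[of k 6 k'] uv by auto
qed

lemma hexagon_edges_no_crossing:
  fixes q q' k k' :: nat
  assumes "k < 6" "k' < 6"
  defines "a \<equiv> min k ((k + 1) mod 6)" and "b \<equiv> max k ((k + 1) mod 6)"
    and "a' \<equiv> min k' ((k' + 1) mod 6)" and "b' \<equiv> max k' ((k' + 1) mod 6)"
  shows "\<not> (q * 6 + a < q' * 6 + a' \<and> q' * 6 + a' < q * 6 + b \<and> q * 6 + b < q' * 6 + b')"
proof
  assume cross: "q * 6 + a < q' * 6 + a' \<and> q' * 6 + a' < q * 6 + b \<and> q * 6 + b < q' * 6 + b'"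
  have "b < 6" "b' < 6"
    using assms by (simp_all add: b_def b'_def)
  then have "q * 6 < q' * 6 + 6" "q' * 6 < q * 6 + 6"
    using cross by simp_all
  then have "q = q'"
    by presburger
  then show False
    using cross assms(1,2) unfolding a_def b_def a'_def b'_def
    by (auto dest!: less_6_cases)
qed

lemma planar_hexagon_layer:
  "planar_graph (kron_vertices (Knnn_vertices (4 * p)) K2_vertices) (layer p (2 * p))"
  unfolding kron_vertices_Knnn_K2
proof (rule planar_graph_if_two_page_book_embedding[OF inj_on_hexagon_slot layer_subset_hexagon_edges,
      where upper = "\<lambda>_. False"])
  fix r :: "nat \<times> nat" assume "r \<in> {..<4 * p} \<times> {..<6}"
  then obtain q k where r: "r = (q, k)" "q < 4 * p" "k < 6"
    by blast
  define a where "a = min k ((k + 1) mod 6)"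
  define b where "b = max k ((k + 1) mod 6)"
  have "a < 6" "b < 6" "a < b"
    using r(3) unfolding a_def b_def by (auto dest!: less_6_cases)
  moreover have "hexagon_lo r = hexagon_vertex q a" "hexagon_hi r = hexagon_vertex q b"
    by (simp_all add: r a_def b_def)
  ultimately show "hexagon_lo r \<in> {cycle_vertex k j | k j. k < 6 \<and> j < 4 * p} \<and>
      hexagon_hi r \<in> {cycle_vertex k j | k j. k < 6 \<and> j < 4 * p} \<and>
      real (hexagon_slot (hexagon_lo r)) < real (hexagon_slot (hexagon_hi r))"
    using hexagon_vertex_mem[OF r(2)] by simp
next
  fix r r' :: "nat \<times> nat" assume "r \<in> {..<4 * p} \<times> {..<6}" "r' \<in> {..<4 * p} \<times> {..<6}"
  then obtain q k q' k' where r: "r = (q, k)" "r' = (q', k')" "k < 6" "k' < 6"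
    by blast
  then show "\<not> (real (hexagon_slot (hexagon_lo r)) < real (hexagon_slot (hexagon_lo r')) \<and>
      real (hexagon_slot (hexagon_lo r')) < real (hexagon_slot (hexagon_hi r)) \<and>
      real (hexagon_slot (hexagon_hi r)) < real (hexagon_slot (hexagon_hi r')))"
  proof -
    have "min k ((k + 1) mod 6) < 6" "max k ((k + 1) mod 6) < 6"
      "min k' ((k' + 1) mod 6) < 6" "max k' ((k' + 1) mod 6) < 6"
      using r(3,4) by simp_all
    then show ?thesis
      using hexagon_edges_no_crossing[OF r(3,4), of q q']
      by (simp only: r(1,2) hexagon_lo.simps hexagon_hi.simps hexagon_slot_hexagon_vertex of_nat_less_iff not_False_eq_True)
  qed
qed

lemma layer_subset_kron_edges: "layer p i \<subseteq> kron_edges (Knnn_edges (4 * p)) K2_edges"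
  unfolding layer_def kron_edges_Knnn_K2 by auto

lemma disjoint_family_layer: "disjoint_family (layer p)"
  unfolding disjoint_family_on_def
proof (intro ballI impI)
  fix i i' :: nat assume "i \<noteq> i'"
  show "layer p i \<inter> layer p i' = {}"
  proof (rule ccontr)
    assume "layer p i \<inter> layer p i' \<noteq> {}"
    then obtain k j j2 k' j' j2' where "cycle_edge k j j2 = cycle_edge k' j' j2'" "k < 6" "k' < 6"
      "layer_index p j j2 = i" "layer_index p j' j2' = i'"
      unfolding layer_def by blast
    then show False
      using \<open>i \<noteq> i'\<close> by (simp add: cycle_edge_eq_iff)
  qed
qed

lemma UN_layer: "(\<Union>i<2 * p + 1. layer p i) = kron_edges (Knnn_edges (4 * p)) K2_edges"
proof
  show "(\<Union>i<2 * p + 1. layer p i) \<subseteq> kron_edges (Knnn_edges (4 * p)) K2_edges"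
    using layer_subset_kron_edges by blast
next
  show "kron_edges (Knnn_edges (4 * p)) K2_edges \<subseteq> (\<Union>i<2 * p + 1. layer p i)"
  proof
    fix e assume "e \<in> kron_edges (Knnn_edges (4 * p)) K2_edges"
    then obtain k j j' where e: "e = cycle_edge k j j'" "k < 6" "j < 4 * p" "j' < 4 * p"
      unfolding kron_edges_Knnn_K2 by blast
    then have "e \<in> layer p (layer_index p j j')"
      unfolding layer_def by blast
    moreover have "layer_index p j j' < 2 * p + 1"
      using e(3) by (auto simp: layer_index_def)
    ultimately show "e \<in> (\<Union>i<2 * p + 1. layer p i)"
      by blast
  qed
qed

lemma thickness_le_if_planar_cover:
  assumes "\<forall>i<k. Es i \<subseteq> E \<and> planar_graph V (Es i)" "(\<Union>i<k. Es i) = E"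
  shows "thickness V E \<le> k"
  unfolding thickness_def using assms by (intro Least_le exI[of _ Es]) simp

theorem lemma4p2:
  fixes p :: nat
  assumes "p \<ge> 1"
  defines "V \<equiv> kron_vertices (Knnn_vertices (4 * p)) K2_vertices"
      and "E \<equiv> kron_edges (Knnn_edges (4 * p)) K2_edges"
  shows "(\<exists>Es :: nat \<Rightarrow> ((nat \<times> nat) \<times> nat) set set.
            (\<forall>i<2 * p + 1. Es i \<subseteq> E \<and> planar_graph V (Es i)) \<and>
            disjoint_family_on Es {..<2 * p + 1} \<and>
            (\<Union>i<2 * p + 1. Es i) = E)
         \<and> thickness V E \<le> 2 * p + 1"
proof -
  \<comment> \<open>the construction does not need \<open>p \<ge> 1\<close>\<close>
  have "planar_graph V (layer p i)" if "i < 2 * p + 1" for i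
  proof (cases "i < 2 * p")
    case True
    then show ?thesis
      unfolding V_def by (rule planar_fan_layer)
  next
    case False
    with that have "i = 2 * p"
      by simp
    then show ?thesis
      unfolding V_def using planar_hexagon_layer by simp
  qed
  then have layers: "\<forall>i<2 * p + 1. layer p i \<subseteq> E \<and> planar_graph V (layer p i)"
    using layer_subset_kron_edges unfolding E_def by blast
  moreover have "disjoint_family_on (layer p) {..<2 * p + 1}"
    using disjoint_family_layer by (rule disjoint_family_on_mono[rotated]) simp
  moreover have union: "(\<Union>i<2 * p + 1. layer p i) = E"
    unfolding E_def by (rule UN_layer)
  ultimately show ?thesis
    using thickness_le_if_planar_cover[OF layers union] by (intro conjI exI[of _ "layer p"]) simp_all
qed

end
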